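(* For $n\ge0$ let $\overline{I_n}:=I-I_n\in\Gamma$. The set $S=\{\overline{I_n}\mid n\ge0\}$ is a left denominator set in $\Gamma$, i.e. $I\in S$, $S\cdot S\subset S$, and (i) for every $\overline{I_n}\in S$ and $E\in\Gamma$ there are $\overline{I_m}\in S$ and $E'\in\Gamma$ with $E'\overline{I_n}=\overline{I_m}E$; (ii) if $\overline{I_n}\in S$ and $E\in\Gamma$ satisfy $E\overline{I_n}=0$, then there is $\overline{I_m}\in S$ with $\overline{I_m}E=0$. Moreover, the localized $k$-algebra $\Gamma[S^{-1}]$ (of left fractions) is naturally isomorphic to $\Sigma=\Gamma/M_\infty$.
   Context: $k$ is a commutative ring; matrices are indexed by $\mathbb{N}=\{1,2,\dots\}$. $\Gamma$ is the unital $k$-algebra of $\mathbb{N}\times\mathbb{N}$ matrices over $k$ having only finitely many distinct entries and such that for some $n_A$ every row and column has at most $n_A$ nonzero entries; $I$ is the identity matrix. $M_\infty\subset\Gamma$ is the two-sided ideal of matrices with finitely many nonzero entries, and $\Sigma:=\Gamma/M_\infty$. For $n\ge0$, $I_n$ is the matrix with $(I_n)_{i,j}=1$ if $i=j\le n$ and $0$ otherwise (so $I_0=0$). *)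

theory Defs
  imports "HOL-Algebra.QuotRing"
begin

text \<open>Matrices indexed by N = {1,2,...} are represented as functions nat => nat => 'a
  which vanish whenever an index is 0 (index 0 is padding only).\<close>

type_synonym 'a mat = "nat \<Rightarrow> nat \<Rightarrow> 'a"

definition Gamma :: "('a::comm_ring_1) mat set" where
  "Gamma = {A. (\<forall>i j. (i = 0 \<or> j = 0) \<longrightarrow> A i j = 0)
              \<and> finite {A i j | i j. 1 \<le> i \<and> 1 \<le> j}
              \<and> (\<exists>n::nat. (\<forall>i. finite {j. A i j \<noteq> 0} \<and> card {j. A i j \<noteq> 0} \<le> n)
                        \<and> (\<forall>j. finite {i. A i j \<noteq> 0} \<and> card {i. A i j \<noteq> 0} \<le> n))}"

definition mat_add :: "('a::comm_ring_1) mat \<Rightarrow> 'a mat \<Rightarrow> 'a mat" where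
  "mat_add A B = (\<lambda>i j. A i j + B i j)"

definition mat_zero :: "('a::comm_ring_1) mat" where
  "mat_zero = (\<lambda>i j. 0)"

text \<open>Product: the sum runs over the (finite, for matrices in Gamma) support of row i of A.\<close>
definition mat_mult :: "('a::comm_ring_1) mat \<Rightarrow> 'a mat \<Rightarrow> 'a mat" where
  "mat_mult A B = (\<lambda>i j. \<Sum>l\<in>{l. A i l \<noteq> 0}. A i l * B l j)"

definition mat_I :: "('a::comm_ring_1) mat" where
  "mat_I = (\<lambda>i j. if i = j \<and> 1 \<le> i then 1 else 0)"

definition mat_In :: "nat \<Rightarrow> ('a::comm_ring_1) mat" where
  "mat_In n = (\<lambda>i j. if i = j \<and> 1 \<le> i \<and> i \<le> n then 1 else 0)"

definition mat_Ibar :: "nat \<Rightarrow> ('a::comm_ring_1) mat" where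
  "mat_Ibar n = (\<lambda>i j. mat_I i j - mat_In n i j)"

definition Gamma_ring :: "('a::comm_ring_1) mat ring" where
  "Gamma_ring = \<lparr>carrier = Gamma, monoid.mult = mat_mult, one = mat_I,
                 zero = mat_zero, add = mat_add\<rparr>"

definition M_inf :: "('a::comm_ring_1) mat set" where
  "M_inf = {A \<in> Gamma. finite {(i, j). A i j \<noteq> 0}}"

definition Sigma_ring :: "('a::comm_ring_1) mat set ring" where
  "Sigma_ring = Gamma_ring Quot M_inf"

definition Sigma_proj :: "('a::comm_ring_1) mat \<Rightarrow> 'a mat set" where
  "Sigma_proj A = M_inf +>\<^bsub>Gamma_ring\<^esub> A"

definition S_den :: "('a::comm_ring_1) mat set" where
  "S_den = range mat_Ibar"

text \<open>Left ring of fractions (Ore localization) R[S^-1] given by a ring hom h : R -> Q,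
  in the standard sense: h maps S to units, every element of Q is a left fraction
  h(s)^-1 h(a), and the kernel of h is {a. exists s in S. s a = 0}.
  Q is then (uniquely up to unique isomorphism) the localization R[S^-1].\<close>
definition left_ring_of_fractions ::
  "('a, 'c) ring_scheme \<Rightarrow> 'a set \<Rightarrow> ('b, 'd) ring_scheme \<Rightarrow> ('a \<Rightarrow> 'b) \<Rightarrow> bool" where
  "left_ring_of_fractions R S Q h \<longleftrightarrow>
     ring R \<and> ring Q \<and> S \<subseteq> carrier R \<and> h \<in> ring_hom R Q
     \<and> (\<forall>s\<in>S. h s \<in> Units Q)
     \<and> (\<forall>q\<in>carrier Q. \<exists>s\<in>S. \<exists>a\<in>carrier R. q = inv\<^bsub>Q\<^esub> (h s) \<otimes>\<^bsub>Q\<^esub> h a)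
     \<and> (\<forall>a\<in>carrier R. h a = \<zero>\<^bsub>Q\<^esub> \<longleftrightarrow> (\<exists>s\<in>S. s \<otimes>\<^bsub>R\<^esub> a = \<zero>\<^bsub>R\<^esub>))"

end

theory Submission
  imports Defs
begin

(* Left multiplication by I - I_n kills the first n rows and right
   multiplication kills the first n columns.  Closure of S under products is then immediate,
   and the Ore condition, reversibility and the description of M_inf as a kernel all reduce
   to one finiteness fact: a matrix in Gamma has only finitely many nonzero entries in its first
   n columns (resp. rows), because every column (resp. row) has finite support.

   The localization statement is then an instance of a general fact about quotient rings:
   if every s in S is congruent to 1 modulo an ideal I, 1 is in S, and I consists exactly of
   the elements annihilated from the left by some s in S, then R -> R/I is the left ring of
   fractions R[S^-1].  Here I - I_n is congruent to I modulo M_inf since I_n lies in M_inf,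
   and a matrix of Gamma lies in M_inf iff it is killed by some I - I_n. *)


lemma (in ideal) quotient_left_ring_of_fractions:
  assumes S_carrier: "S \<subseteq> carrier R"
    and one_in_S: "\<one> \<in> S"
    and S_one_mod: "\<And>s. s \<in> S \<Longrightarrow> s \<ominus> \<one> \<in> I"
    and ideal_eq_annihilated: "\<And>a. a \<in> carrier R \<Longrightarrow> a \<in> I \<longleftrightarrow> (\<exists>s\<in>S. s \<otimes> a = \<zero>)"
  shows "left_ring_of_fractions R S (R Quot I) ((+>) I)"
proof -
  interpret Q: ring "R Quot I" by (rule quotient_is_ring)
  have hom: "(+>) I \<in> ring_hom R (R Quot I)" by (rule rcos_ring_hom)
  have S_to_one: "I +> s = \<one>\<^bsub>R Quot I\<^esub>" if "s \<in> S" for s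
    using quotient_eq_iff_same_a_r_cos[OF ideal_axioms] S_one_mod[OF that] that S_carrier
    by (auto simp: FactRing_def)
  have fractions: "\<exists>s\<in>S. \<exists>a\<in>carrier R. q = inv\<^bsub>R Quot I\<^esub> (I +> s) \<otimes>\<^bsub>R Quot I\<^esub> (I +> a)"
    if q: "q \<in> carrier (R Quot I)" for q
  proof -
    obtain a where a: "a \<in> carrier R" "q = I +> a"
      using q unfolding FactRing_def A_RCOSETS_def' by auto
    then have "q = inv\<^bsub>R Quot I\<^esub> (I +> \<one>) \<otimes>\<^bsub>R Quot I\<^esub> (I +> a)"
      using S_to_one[OF one_in_S] ring_hom_closed[OF hom a(1)] by simp
    then show ?thesis using one_in_S a(1) by blast
  qed
  have kernel: "I +> a = \<zero>\<^bsub>R Quot I\<^esub> \<longleftrightarrow> (\<exists>s\<in>S. s \<otimes> a = \<zero>)" if "a \<in> carrier R" for a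
    using rcos_const_imp_mem[OF that] a_rcos_zero[OF ideal_axioms] ideal_eq_annihilated[OF that]
    by (auto simp: FactRing_def)
  show ?thesis
    unfolding left_ring_of_fractions_def
    using ring_axioms Q.ring_axioms S_carrier hom S_to_one fractions kernel by auto
qed


lemma GammaD_padding:
  assumes "A \<in> Gamma"
  shows "A 0 j = 0" "A i 0 = 0"
  using assms unfolding Gamma_def by auto

lemma GammaD_row_finite: "A \<in> Gamma \<Longrightarrow> finite {j. A i j \<noteq> 0}"
  unfolding Gamma_def by auto

lemma GammaD_col_finite: "A \<in> Gamma \<Longrightarrow> finite {i. A i j \<noteq> 0}"
  unfolding Gamma_def by auto

lemma GammaD_bound:
  "A \<in> Gamma \<Longrightarrow> \<exists>n. (\<forall>i. card {j. A i j \<noteq> 0} \<le> n) \<and> (\<forall>j. card {i. A i j \<noteq> 0} \<le> n)"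
  unfolding Gamma_def by blast

(* The padding entries are zero, so the set of all entries is finite as well. *)
lemma GammaD_values_finite:
  assumes "A \<in> Gamma"
  shows "finite {A i j | i j. True}"
proof -
  have "A i j \<in> insert 0 {A i j | i j. 1 \<le> i \<and> 1 \<le> j}" for i j
  proof (cases "i = 0 \<or> j = 0")
    case True
    then show ?thesis using GammaD_padding[OF assms] by auto
  next
    case False
    then have "1 \<le> i" "1 \<le> j" by auto
    then show ?thesis by blast
  qed
  then have "{A i j | i j. True} \<subseteq> insert 0 {A i j | i j. 1 \<le> i \<and> 1 \<le> j}"
    by blast
  moreover have "finite {A i j | i j. 1 \<le> i \<and> 1 \<le> j}"
    using assms unfolding Gamma_def by blast
  ultimately show ?thesis by (meson finite_insert finite_subset)
qed

lemma GammaI: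
  assumes "\<And>j. A 0 j = 0" "\<And>i. A i 0 = 0"
    and "finite {A i j | i j. True}"
    and "\<And>i. finite {j. A i j \<noteq> 0}" "\<And>j. finite {i. A i j \<noteq> 0}"
    and "\<And>i. card {j. A i j \<noteq> 0} \<le> n" "\<And>j. card {i. A i j \<noteq> 0} \<le> n"
  shows "A \<in> Gamma"
proof -
  have "finite {A i j | i j. 1 \<le> i \<and> 1 \<le> j}"
    by (rule finite_subset[OF _ assms(3)]) blast
  then show ?thesis
    unfolding Gamma_def using assms(1,2,4-7) by (auto intro!: exI[of _ n])
qed

lemma Gamma_first_columns_bounded:
  assumes "E \<in> Gamma"
  obtains m where "\<And>i j. E i j \<noteq> 0 \<Longrightarrow> j \<le> n \<Longrightarrow> i \<le> m"
proof -
  have "finite (\<Union>j\<le>n. {i. E i j \<noteq> 0})" using GammaD_col_finite[OF assms] by auto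
  then obtain m where "\<forall>i\<in>(\<Union>j\<le>n. {i. E i j \<noteq> 0}). i \<le> m"
    using finite_nat_set_iff_bounded_le by blast
  then show ?thesis using that by blast
qed

lemma Gamma_first_rows_bounded:
  assumes "E \<in> Gamma"
  obtains m where "\<And>i j. E i j \<noteq> 0 \<Longrightarrow> i \<le> n \<Longrightarrow> j \<le> m"
proof -
  have "finite (\<Union>i\<le>n. {j. E i j \<noteq> 0})" using GammaD_row_finite[OF assms] by auto
  then obtain m where "\<forall>j\<in>(\<Union>i\<le>n. {j. E i j \<noteq> 0}). j \<le> m"
    using finite_nat_set_iff_bounded_le by blast
  then show ?thesis using that by blast
qed


lemma mat_mult_nonzeroD: "mat_mult A B i j \<noteq> 0 \<Longrightarrow> \<exists>l. A i l \<noteq> 0 \<and> B l j \<noteq> 0"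
proof (rule ccontr)
  assume "mat_mult A B i j \<noteq> 0" "\<nexists>l. A i l \<noteq> 0 \<and> B l j \<noteq> 0"
  then have "\<forall>l\<in>{l. A i l \<noteq> 0}. A i l * B l j = 0" by auto
  then have "mat_mult A B i j = 0" unfolding mat_mult_def by (rule sum.neutral)
  with \<open>mat_mult A B i j \<noteq> 0\<close> show False by simp
qed

lemma mat_mult_sum_superset:
  assumes "finite F" "{l. A i l \<noteq> 0} \<subseteq> F"
  shows "mat_mult A B i j = (\<Sum>l\<in>F. A i l * B l j)"
  unfolding mat_mult_def by (rule sum.mono_neutral_left) (use assms in auto)

(* Sums of exactly k elements of P; a product entry of two Gamma matrices is such a sum of
   products of entries, which bounds the number of distinct product entries. *)
fun k_fold_sums :: "'a::comm_monoid_add set \<Rightarrow> nat \<Rightarrow> 'a set" where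
  "k_fold_sums P 0 = {0}"
| "k_fold_sums P (Suc k) = (\<lambda>(x, y). x + y) ` (P \<times> k_fold_sums P k)"

lemma finite_k_fold_sums: "finite P \<Longrightarrow> finite (k_fold_sums P k)"
  by (induction k) auto

lemma sum_in_k_fold_sums:
  assumes "finite L" "\<And>l. l \<in> L \<Longrightarrow> f l \<in> P"
  shows "sum f L \<in> k_fold_sums P (card L)"
  using assms
proof (induction L rule: finite_induct)
  case (insert x F)
  then show ?case by (auto intro!: image_eqI[where x="(f x, sum f F)"])
qed simp

lemma card_UN_le_mult:
  assumes "finite K" "card K \<le> a" "\<And>k. k \<in> K \<Longrightarrow> finite (F k)" "\<And>k. k \<in> K \<Longrightarrow> card (F k) \<le> b"
  shows "finite (\<Union>k\<in>K. F k)" "card (\<Union>k\<in>K. F k) \<le> a * b"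
proof -
  show "finite (\<Union>k\<in>K. F k)" using assms(1,3) by blast
  have "card (\<Union>k\<in>K. F k) \<le> (\<Sum>k\<in>K. card (F k))" by (rule card_UN_le[OF assms(1)])
  also have "\<dots> \<le> card K * b" using sum_bounded_above[of K "\<lambda>k. card (F k)" b] assms(4) by simp
  also have "\<dots> \<le> a * b" using assms(2) by simp
  finally show "card (\<Union>k\<in>K. F k) \<le> a * b" .
qed

(* A product of Gamma matrices takes finitely many values: its entries are sums of at most
   nA products of entries of the factors. *)
lemma mat_mult_values_finite:
  assumes A: "A \<in> Gamma" and B: "B \<in> Gamma" and nA: "\<And>i. card {j. A i j \<noteq> 0} \<le> nA"
  shows "finite {mat_mult A B i j | i j. True}"
proof -
  define P where "P = (\<lambda>(x, y). x * y) ` ({A i j | i j. True} \<times> {B i j | i j. True})"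
  have "finite P" unfolding P_def using GammaD_values_finite[OF A] GammaD_values_finite[OF B] by auto
  moreover have "mat_mult A B i j \<in> k_fold_sums P (card {l. A i l \<noteq> 0})" for i j
    unfolding mat_mult_def
    by (rule sum_in_k_fold_sums) (use GammaD_row_finite[OF A] in \<open>auto simp: P_def\<close>)
  then have "{mat_mult A B i j | i j. True} \<subseteq> (\<Union>k\<le>nA. k_fold_sums P k)"
    using nA by fastforce
  ultimately show ?thesis by (meson finite_UN_I finite_atMost finite_k_fold_sums finite_subset)
qed

(* Gamma is closed under products: row and column supports of AB are unions of at most
   nA supports of size at most nB. *)
lemma mult_Gamma:
  assumes A: "A \<in> Gamma" and B: "B \<in> Gamma"
  shows "mat_mult A B \<in> Gamma"
proof -
  obtain nA where nA: "\<And>i. card {j. A i j \<noteq> 0} \<le> nA" "\<And>j. card {i. A i j \<noteq> 0} \<le> nA"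
    using GammaD_bound[OF A] by blast
  obtain nB where nB: "\<And>i. card {j. B i j \<noteq> 0} \<le> nB" "\<And>j. card {i. B i j \<noteq> 0} \<le> nB"
    using GammaD_bound[OF B] by blast
  have row_sub: "{j. mat_mult A B i j \<noteq> 0} \<subseteq> (\<Union>l\<in>{l. A i l \<noteq> 0}. {j. B l j \<noteq> 0})" for i
    using mat_mult_nonzeroD by fastforce
  have col_sub: "{i. mat_mult A B i j \<noteq> 0} \<subseteq> (\<Union>l\<in>{l. B l j \<noteq> 0}. {i. A i l \<noteq> 0})" for j
    using mat_mult_nonzeroD by fastforce
  have row_UN: "finite (\<Union>l\<in>{l. A i l \<noteq> 0}. {j. B l j \<noteq> 0})"
      "card (\<Union>l\<in>{l. A i l \<noteq> 0}. {j. B l j \<noteq> 0}) \<le> nA * nB" for i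
    using card_UN_le_mult[OF GammaD_row_finite[OF A] nA(1) GammaD_row_finite[OF B] nB(1)] .
  have col_UN: "finite (\<Union>l\<in>{l. B l j \<noteq> 0}. {i. A i l \<noteq> 0})"
      "card (\<Union>l\<in>{l. B l j \<noteq> 0}. {i. A i l \<noteq> 0}) \<le> nB * nA" for j
    using card_UN_le_mult[OF GammaD_col_finite[OF B] nB(2) GammaD_col_finite[OF A] nA(2)] .
  have row_finite: "finite {j. mat_mult A B i j \<noteq> 0}" for i
    using finite_subset[OF row_sub row_UN(1)] .
  have col_finite: "finite {i. mat_mult A B i j \<noteq> 0}" for j
    using finite_subset[OF col_sub col_UN(1)] .
  have row_card: "card {j. mat_mult A B i j \<noteq> 0} \<le> nA * nB" for i
    using card_mono[OF row_UN(1) row_sub] row_UN(2) by (rule order_trans)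
  have col_card: "card {i. mat_mult A B i j \<noteq> 0} \<le> nA * nB" for j
    using order_trans[OF card_mono[OF col_UN(1) col_sub] col_UN(2)] by (simp add: mult.commute)
  show ?thesis
  proof (rule GammaI[OF _ _ mat_mult_values_finite[OF A B nA(1)] row_finite col_finite row_card col_card])
    show "mat_mult A B 0 j = 0" "mat_mult A B i 0 = 0" for i j
      unfolding mat_mult_def using GammaD_padding[OF A] GammaD_padding[OF B] by simp_all
  qed
qed

lemma add_Gamma:
  assumes A: "A \<in> Gamma" and B: "B \<in> Gamma"
  shows "mat_add A B \<in> Gamma"
proof -
  obtain nA where nA: "\<And>i. card {j. A i j \<noteq> 0} \<le> nA" "\<And>j. card {i. A i j \<noteq> 0} \<le> nA"
    using GammaD_bound[OF A] by blast
  obtain nB where nB: "\<And>i. card {j. B i j \<noteq> 0} \<le> nB" "\<And>j. card {i. B i j \<noteq> 0} \<le> nB"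
    using GammaD_bound[OF B] by blast
  have row_sub: "{j. mat_add A B i j \<noteq> 0} \<subseteq> {j. A i j \<noteq> 0} \<union> {j. B i j \<noteq> 0}" for i
    unfolding mat_add_def by auto
  have col_sub: "{i. mat_add A B i j \<noteq> 0} \<subseteq> {i. A i j \<noteq> 0} \<union> {i. B i j \<noteq> 0}" for j
    unfolding mat_add_def by auto
  note row_fin = GammaD_row_finite[OF A] GammaD_row_finite[OF B]
  note col_fin = GammaD_col_finite[OF A] GammaD_col_finite[OF B]
  have add_values: "{mat_add A B i j | i j. True}
      \<subseteq> (\<lambda>(x, y). x + y) ` ({A i j | i j. True} \<times> {B i j | i j. True})"
    unfolding mat_add_def by force
  show ?thesis
  proof (rule GammaI[where n="nA + nB"])
    show "mat_add A B 0 j = 0" "mat_add A B i 0 = 0" for i j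
      unfolding mat_add_def using GammaD_padding[OF A] GammaD_padding[OF B] by simp_all
    show "finite {mat_add A B i j | i j. True}"
      by (rule finite_subset[OF add_values])
        (intro finite_imageI finite_cartesian_product GammaD_values_finite[OF A]
          GammaD_values_finite[OF B])
    show "finite {j. mat_add A B i j \<noteq> 0}" for i using finite_subset[OF row_sub] row_fin by blast
    show "finite {i. mat_add A B i j \<noteq> 0}" for j using finite_subset[OF col_sub] col_fin by blast
    show "card {j. mat_add A B i j \<noteq> 0} \<le> nA + nB" for i
    proof -
      have "card {j. mat_add A B i j \<noteq> 0} \<le> card ({j. A i j \<noteq> 0} \<union> {j. B i j \<noteq> 0})"
        by (rule card_mono[OF _ row_sub]) (simp add: row_fin)
      also have "\<dots> \<le> card {j. A i j \<noteq> 0} + card {j. B i j \<noteq> 0}" by (rule card_Un_le)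
      finally show ?thesis using nA(1)[of i] nB(1)[of i] by linarith
    qed
    show "card {i. mat_add A B i j \<noteq> 0} \<le> nA + nB" for j
    proof -
      have "card {i. mat_add A B i j \<noteq> 0} \<le> card ({i. A i j \<noteq> 0} \<union> {i. B i j \<noteq> 0})"
        by (rule card_mono[OF _ col_sub]) (simp add: col_fin)
      also have "\<dots> \<le> card {i. A i j \<noteq> 0} + card {i. B i j \<noteq> 0}" by (rule card_Un_le)
      finally show ?thesis using nA(2)[of j] nB(2)[of j] by linarith
    qed
  qed
qed

lemma neg_Gamma:
  assumes A: "A \<in> Gamma"
  shows "(\<lambda>i j. - A i j) \<in> Gamma"
proof -
  obtain nA where "\<And>i. card {j. A i j \<noteq> 0} \<le> nA" "\<And>j. card {i. A i j \<noteq> 0} \<le> nA"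
    using GammaD_bound[OF A] by blast
  moreover have "{- A i j | i j. True} = uminus ` {A i j | i j. True}" by blast
  ultimately show ?thesis
    using GammaD_padding[OF A] GammaD_values_finite[OF A] GammaD_row_finite[OF A]
      GammaD_col_finite[OF A]
    by (intro GammaI[where n=nA]) auto
qed

lemma zero_Gamma: "mat_zero \<in> Gamma"
  by (rule GammaI[where n=0]) (auto simp: mat_zero_def)

lemma diagonal_01_Gamma:
  assumes diag: "\<And>i j. A i j \<noteq> 0 \<Longrightarrow> i = j \<and> 1 \<le> i" and zero_one: "\<And>i j. A i j \<in> {0, 1}"
  shows "A \<in> Gamma"
proof (rule GammaI[where n=1])
  have row: "{j. A i j \<noteq> 0} \<subseteq> {i}" and col: "{j. A j i \<noteq> 0} \<subseteq> {i}" for i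
    using diag by auto
  show "A 0 j = 0" "A i 0 = 0" for i j using diag[of 0 j] diag[of i 0] by auto
  show "finite {A i j |i j. True}" by (rule finite_subset[of _ "{0, 1}"]) (use zero_one in auto)
  show "finite {j. A i j \<noteq> 0}" "card {j. A i j \<noteq> 0} \<le> 1" for i
    using finite_subset[OF row] card_mono[OF _ row] by auto
  show "finite {j. A j i \<noteq> 0}" "card {j. A j i \<noteq> 0} \<le> 1" for i
    using finite_subset[OF col] card_mono[OF _ col] by auto
qed

lemma I_Gamma: "mat_I \<in> Gamma"
  by (rule diagonal_01_Gamma) (auto simp: mat_I_def split: if_splits)

lemma In_Gamma: "mat_In n \<in> Gamma"
  by (rule diagonal_01_Gamma) (auto simp: mat_In_def split: if_splits)

lemma Ibar_Gamma: "mat_Ibar n \<in> Gamma"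
  by (rule diagonal_01_Gamma) (auto simp: mat_Ibar_def mat_I_def mat_In_def split: if_splits)


(* The ring axioms for Gamma.  Associativity reduces to exchanging two finite sums, all
   taken over finite supersets of the relevant row supports. *)
lemma mult_assoc_Gamma:
  assumes A: "A \<in> Gamma" and B: "B \<in> Gamma"
  shows "mat_mult (mat_mult A B) C = mat_mult A (mat_mult B C)"
proof (intro ext)
  fix i j
  define K where "K = {k. A i k \<noteq> 0}"
  define L where "L = (\<Union>k\<in>K. {l. B k l \<noteq> 0})"
  have K_finite: "finite K" unfolding K_def by (rule GammaD_row_finite[OF A])
  have L_finite: "finite L" unfolding L_def using K_finite GammaD_row_finite[OF B] by auto
  have "{l. mat_mult A B i l \<noteq> 0} \<subseteq> L"
    unfolding L_def K_def using mat_mult_nonzeroD by fastforce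
  then have "mat_mult (mat_mult A B) C i j = (\<Sum>l\<in>L. mat_mult A B i l * C l j)"
    by (rule mat_mult_sum_superset[OF L_finite])
  also have "\<dots> = (\<Sum>l\<in>L. \<Sum>k\<in>K. A i k * B k l * C l j)"
    unfolding mat_mult_def K_def by (simp add: sum_distrib_right)
  also have "\<dots> = (\<Sum>k\<in>K. \<Sum>l\<in>L. A i k * B k l * C l j)" by (rule sum.swap)
  also have "\<dots> = (\<Sum>k\<in>K. A i k * mat_mult B C k j)"
  proof (rule sum.cong[OF refl])
    fix k assume "k \<in> K"
    then have "mat_mult B C k j = (\<Sum>l\<in>L. B k l * C l j)"
      by (intro mat_mult_sum_superset[OF L_finite]) (auto simp: L_def)
    then show "(\<Sum>l\<in>L. A i k * B k l * C l j) = A i k * mat_mult B C k j"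
      by (simp add: sum_distrib_left mult.assoc)
  qed
  also have "\<dots> = mat_mult A (mat_mult B C) i j" unfolding mat_mult_def K_def ..
  finally show "mat_mult (mat_mult A B) C i j = mat_mult A (mat_mult B C) i j" .
qed

lemma mult_add_distrib_left:
  assumes A: "A \<in> Gamma" and B: "B \<in> Gamma"
  shows "mat_mult (mat_add A B) C = mat_add (mat_mult A C) (mat_mult B C)"
proof (intro ext)
  fix i j
  define F where "F = {l. A i l \<noteq> 0} \<union> {l. B i l \<noteq> 0}"
  have F_finite: "finite F" unfolding F_def using GammaD_row_finite[OF A] GammaD_row_finite[OF B] by auto
  have "{l. mat_add A B i l \<noteq> 0} \<subseteq> F" "{l. A i l \<noteq> 0} \<subseteq> F" "{l. B i l \<noteq> 0} \<subseteq> F"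
    unfolding F_def mat_add_def by auto
  then show "mat_mult (mat_add A B) C i j = mat_add (mat_mult A C) (mat_mult B C) i j"
    by (simp add: mat_mult_sum_superset[OF F_finite] mat_add_def sum.distrib distrib_right)
qed

lemma mult_add_distrib_right: "mat_mult A (mat_add B C) = mat_add (mat_mult A B) (mat_mult A C)"
  unfolding mat_mult_def mat_add_def by (simp add: sum.distrib distrib_left)

lemma Gamma_ring_simps [simp]:
  "carrier Gamma_ring = Gamma" "mult Gamma_ring = mat_mult" "one Gamma_ring = mat_I"
  "zero Gamma_ring = mat_zero" "add Gamma_ring = mat_add"
  by (simp_all add: Gamma_ring_def)


lemma Ibar_eq: "mat_Ibar n i j = (if i = j \<and> n < i then 1 else 0)"
  by (auto simp: mat_Ibar_def mat_I_def mat_In_def)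

lemma Ibar_0: "mat_Ibar 0 = mat_I"
  by (intro ext) (simp add: Ibar_eq mat_I_def)

lemma Ibar_mult: "mat_mult (mat_Ibar m) E i j = (if m < i then E i j else 0)"
proof -
  have "{l. mat_Ibar m i l \<noteq> 0} = (if m < i then {i} else {})" by (auto simp: Ibar_eq)
  then show ?thesis unfolding mat_mult_def by (simp add: Ibar_eq)
qed

lemma mult_Ibar:
  assumes "E \<in> Gamma"
  shows "mat_mult E (mat_Ibar n) i j = (if n < j then E i j else 0)"
proof -
  have "mat_mult E (mat_Ibar n) i j
      = (\<Sum>l\<in>{l. E i l \<noteq> 0}. if j = l then (if n < j then E i l else 0) else 0)"
    unfolding mat_mult_def by (rule sum.cong) (auto simp: Ibar_eq)
  also have "\<dots> = (if n < j then E i j else 0)"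
    by (subst sum.delta') (auto simp: GammaD_row_finite[OF assms])
  finally show ?thesis .
qed

lemma Ibar_mult_eq_zero: "mat_mult (mat_Ibar n) E = mat_zero \<longleftrightarrow> (\<forall>i j. n < i \<longrightarrow> E i j = 0)"
  by (auto simp: fun_eq_iff Ibar_mult mat_zero_def)

lemma mult_Ibar_eq_zero:
  "E \<in> Gamma \<Longrightarrow> mat_mult E (mat_Ibar n) = mat_zero \<longleftrightarrow> (\<forall>i j. n < j \<longrightarrow> E i j = 0)"
  by (auto simp: fun_eq_iff mult_Ibar mat_zero_def)

lemma Ibar_mult_Ibar: "mat_mult (mat_Ibar m) (mat_Ibar n) = mat_Ibar (max m n)"
  by (auto simp: fun_eq_iff Ibar_mult Ibar_eq)

lemma ring_Gamma: "ring (Gamma_ring :: ('a::comm_ring_1) mat ring)"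
proof (rule ringI)
  show "abelian_group (Gamma_ring :: 'a mat ring)"
  proof (rule abelian_groupI, simp_all add: add_Gamma zero_Gamma)
    show "mat_add (mat_add x y) z = mat_add x (mat_add y z)" for x y z :: "'a mat"
      by (simp add: mat_add_def add.assoc)
    show "mat_add x y = mat_add y x" for x y :: "'a mat"
      by (simp add: mat_add_def add.commute)
    show "mat_add mat_zero x = x" for x :: "'a mat"
      by (simp add: mat_add_def mat_zero_def)
    show "\<exists>y\<in>Gamma. mat_add y x = mat_zero" if "x \<in> Gamma" for x :: "'a mat"
      by (rule bexI[of _ "\<lambda>i j. - x i j"]) (auto simp: mat_add_def mat_zero_def neg_Gamma that)
  qed
  have identity: "mat_mult mat_I E = E" "mat_mult E mat_I = E" if "E \<in> Gamma" for E :: "'a mat"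
    using Ibar_mult[of 0 E] mult_Ibar[OF that, of 0] GammaD_padding[OF that]
    by (auto simp: fun_eq_iff Ibar_0)
  show "monoid (Gamma_ring :: 'a mat ring)"
    by (rule monoidI) (auto simp: mult_Gamma I_Gamma mult_assoc_Gamma identity)
qed (auto simp: mult_add_distrib_left mult_add_distrib_right)

lemma a_inv_Gamma: "A \<in> Gamma \<Longrightarrow> \<ominus>\<^bsub>Gamma_ring\<^esub> A = (\<lambda>i j. - A i j)"
  by (rule abelian_group.minus_equality[OF ring.is_abelian_group[OF ring_Gamma]])
     (auto simp: mat_add_def mat_zero_def neg_Gamma)


definition supported_in :: "nat \<Rightarrow> ('a::zero) mat \<Rightarrow> bool" where
  "supported_in N A \<longleftrightarrow> (\<forall>i j. A i j \<noteq> 0 \<longrightarrow> i \<le> N \<and> j \<le> N)"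

lemma finite_support_iff_supported_in:
  "finite {(i, j). (A :: ('a::zero) mat) i j \<noteq> 0} \<longleftrightarrow> (\<exists>N. supported_in N A)"
proof
  assume "finite {(i, j). A i j \<noteq> 0}"
  then have "finite ((\<lambda>(i, j). max i j) ` {(i, j). A i j \<noteq> 0})" by simp
  then obtain N where "\<forall>x\<in>(\<lambda>(i, j). max i j) ` {(i, j). A i j \<noteq> 0}. x \<le> N"
    using finite_nat_set_iff_bounded_le by blast
  then have "supported_in N A" unfolding supported_in_def by fastforce
  then show "\<exists>N. supported_in N A" ..
next
  assume "\<exists>N. supported_in N A"
  then obtain N where "{(i, j). A i j \<noteq> 0} \<subseteq> {..N} \<times> {..N}"
    unfolding supported_in_def by auto
  then show "finite {(i, j). A i j \<noteq> 0}" using finite_subset by blast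
qed

lemma M_inf_iff: "A \<in> M_inf \<longleftrightarrow> A \<in> Gamma \<and> (\<exists>N. supported_in N A)"
  unfolding M_inf_def using finite_support_iff_supported_in[of A] by auto

lemma supported_in_mono: "supported_in N A \<Longrightarrow> N \<le> M \<Longrightarrow> supported_in M A"
  unfolding supported_in_def by force

lemma supported_in_add: "supported_in N A \<Longrightarrow> supported_in N B \<Longrightarrow> supported_in N (mat_add A B)"
  unfolding supported_in_def mat_add_def by (metis add.right_neutral)

lemma M_inf_mult_left:
  assumes A: "A \<in> M_inf" and X: "X \<in> Gamma"
  shows "mat_mult X A \<in> M_inf"
proof -
  obtain N where N: "supported_in N A" and A_Gamma: "A \<in> Gamma"
    using A unfolding M_inf_iff by blast
  obtain M where M: "\<And>i l. X i l \<noteq> 0 \<Longrightarrow> l \<le> N \<Longrightarrow> i \<le> M"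
    using Gamma_first_columns_bounded[OF X] by blast
  have "supported_in (max N M) (mat_mult X A)"
    using mat_mult_nonzeroD N M unfolding supported_in_def by fastforce
  then show ?thesis unfolding M_inf_iff using mult_Gamma[OF X A_Gamma] by blast
qed

lemma M_inf_mult_right:
  assumes A: "A \<in> M_inf" and X: "X \<in> Gamma"
  shows "mat_mult A X \<in> M_inf"
proof -
  obtain N where N: "supported_in N A" and A_Gamma: "A \<in> Gamma"
    using A unfolding M_inf_iff by blast
  obtain M where M: "\<And>l j. X l j \<noteq> 0 \<Longrightarrow> l \<le> N \<Longrightarrow> j \<le> M"
    using Gamma_first_rows_bounded[OF X] by blast
  have "supported_in (max N M) (mat_mult A X)"
    using mat_mult_nonzeroD N M unfolding supported_in_def by fastforce
  then show ?thesis unfolding M_inf_iff using mult_Gamma[OF A_Gamma X] by blast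
qed

lemma ideal_M_inf: "ideal M_inf (Gamma_ring :: ('a::comm_ring_1) mat ring)"
proof (rule idealI[OF ring_Gamma])
  show "subgroup (M_inf :: 'a mat set) (add_monoid Gamma_ring)"
  proof (rule subgroup.intro)
    show "(M_inf :: 'a mat set) \<subseteq> carrier (add_monoid Gamma_ring)"
      unfolding M_inf_def by auto
    show "x \<otimes>\<^bsub>add_monoid Gamma_ring\<^esub> y \<in> M_inf" if xy: "x \<in> M_inf" "y \<in> M_inf"
      for x y :: "'a mat"
    proof -
      obtain N1 N2 where "supported_in N1 x" "supported_in N2 y" "x \<in> Gamma" "y \<in> Gamma"
        using xy unfolding M_inf_iff by blast
      then have "supported_in (max N1 N2) (mat_add x y)" "mat_add x y \<in> Gamma"
        using supported_in_add supported_in_mono add_Gamma by (metis max.cobounded1 max.cobounded2)+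
      then show ?thesis unfolding M_inf_iff by auto
    qed
    show "\<one>\<^bsub>add_monoid Gamma_ring\<^esub> \<in> (M_inf :: 'a mat set)"
      unfolding M_inf_iff supported_in_def using zero_Gamma by (auto simp: mat_zero_def)
    show "inv\<^bsub>add_monoid Gamma_ring\<^esub> x \<in> M_inf" if "x \<in> (M_inf :: 'a mat set)" for x
      using that a_inv_Gamma[of x] neg_Gamma[of x]
      unfolding M_inf_iff supported_in_def a_inv_def by auto
  qed
qed (auto simp: M_inf_mult_left M_inf_mult_right)

(* I - I_n is congruent to the identity modulo M_inf: the difference is -I_n. *)
lemma Ibar_minus_I_in_M_inf: "mat_Ibar n \<ominus>\<^bsub>Gamma_ring\<^esub> mat_I \<in> (M_inf :: ('a::comm_ring_1) mat set)"
proof -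
  have "mat_Ibar n \<ominus>\<^bsub>Gamma_ring\<^esub> mat_I = (\<lambda>i j. - (mat_In n i j :: 'a))"
    by (auto simp: fun_eq_iff a_minus_def a_inv_Gamma[OF I_Gamma] mat_add_def mat_Ibar_def)
  moreover have "supported_in n (\<lambda>i j. - (mat_In n i j :: 'a))"
    unfolding supported_in_def by (auto simp: mat_In_def)
  ultimately show ?thesis unfolding M_inf_iff using neg_Gamma[OF In_Gamma] by auto
qed

lemma M_inf_iff_annihilated:
  assumes A: "A \<in> Gamma"
  shows "A \<in> M_inf \<longleftrightarrow> (\<exists>n. mat_mult (mat_Ibar n) A = mat_zero)"
proof
  assume "A \<in> M_inf"
  then obtain N where "supported_in N A" unfolding M_inf_iff by blast
  then have "mat_mult (mat_Ibar N) A = mat_zero"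
    unfolding Ibar_mult_eq_zero supported_in_def by (meson not_le)
  then show "\<exists>n. mat_mult (mat_Ibar n) A = mat_zero" ..
next
  assume "\<exists>n. mat_mult (mat_Ibar n) A = mat_zero"
  then obtain n where n: "\<And>i j. n < i \<Longrightarrow> A i j = 0" unfolding Ibar_mult_eq_zero by blast
  obtain M where "\<And>i j. A i j \<noteq> 0 \<Longrightarrow> i \<le> n \<Longrightarrow> j \<le> M"
    using Gamma_first_rows_bounded[OF A] by blast
  with n have "supported_in (max n M) A"
    unfolding supported_in_def by (metis le_max_iff_disj not_le)
  then show "A \<in> M_inf" unfolding M_inf_iff using A by blast
qed


lemma I_in_S_den: "mat_I \<in> S_den"
  unfolding S_den_def using Ibar_0 by (metis rangeI)

lemma S_den_mult_closed: "s \<in> S_den \<Longrightarrow> t \<in> S_den \<Longrightarrow> mat_mult s t \<in> S_den"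
  unfolding S_den_def using Ibar_mult_Ibar by auto

(* Left Ore condition: E (I - I_n) = (I - I_m) E', taking E' = (I - I_m) E where the rows
   beyond m avoid the first n columns of E. *)
lemma S_den_left_Ore:
  assumes E: "E \<in> Gamma"
  shows "\<exists>m. \<exists>E'\<in>Gamma. mat_mult E' (mat_Ibar n) = mat_mult (mat_Ibar m) E"
proof -
  obtain m where m: "\<And>i j. E i j \<noteq> 0 \<Longrightarrow> j \<le> n \<Longrightarrow> i \<le> m"
    using Gamma_first_columns_bounded[OF E] by blast
  have E'_Gamma: "mat_mult (mat_Ibar m) E \<in> Gamma" by (rule mult_Gamma[OF Ibar_Gamma E])
  have "E i j = 0" if "m < i" "j \<le> n" for i j
    using m[of i j] that by fastforce
  then have "mat_mult (mat_mult (mat_Ibar m) E) (mat_Ibar n) = mat_mult (mat_Ibar m) E"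
    by (auto simp: fun_eq_iff mult_Ibar[OF E'_Gamma] Ibar_mult not_less)
  then show ?thesis using E'_Gamma by blast
qed

(* Left reversibility: if E (I - I_n) = 0 then E lives in the first n columns, hence in
   finitely many rows, and is killed by some I - I_m from the left. *)
lemma S_den_left_reversible:
  assumes E: "E \<in> Gamma" and zero: "mat_mult E (mat_Ibar n) = mat_zero"
  shows "\<exists>m. mat_mult (mat_Ibar m) E = mat_zero"
proof -
  have columns: "\<And>i j. n < j \<Longrightarrow> E i j = 0" using zero unfolding mult_Ibar_eq_zero[OF E] by blast
  obtain m where "\<And>i j. E i j \<noteq> 0 \<Longrightarrow> j \<le> n \<Longrightarrow> i \<le> m"
    using Gamma_first_columns_bounded[OF E] by blast
  with columns have "\<forall>i j. m < i \<longrightarrow> E i j = 0" by (meson not_le)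
  then show ?thesis unfolding Ibar_mult_eq_zero by blast
qed

lemma Sigma_left_ring_of_fractions:
  "left_ring_of_fractions (Gamma_ring :: ('a::comm_ring_1) mat ring) S_den Sigma_ring Sigma_proj"
proof -
  interpret ideal "M_inf :: 'a mat set" "Gamma_ring :: 'a mat ring" by (rule ideal_M_inf)
  have "Sigma_proj = ((+>\<^bsub>Gamma_ring\<^esub>) M_inf :: 'a mat \<Rightarrow> 'a mat set)"
    by (intro ext) (simp add: Sigma_proj_def)
  moreover have "left_ring_of_fractions Gamma_ring S_den (Gamma_ring Quot M_inf)
      ((+>\<^bsub>Gamma_ring\<^esub>) (M_inf :: 'a mat set))"
  proof (rule quotient_left_ring_of_fractions)
    show "S_den \<subseteq> carrier Gamma_ring" unfolding S_den_def using Ibar_Gamma by auto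
    show "\<one>\<^bsub>Gamma_ring\<^esub> \<in> S_den" using I_in_S_den by simp
    show "s \<ominus>\<^bsub>Gamma_ring\<^esub> \<one>\<^bsub>Gamma_ring\<^esub> \<in> M_inf" if "s \<in> S_den" for s
      using that Ibar_minus_I_in_M_inf unfolding S_den_def by auto
    show "a \<in> M_inf \<longleftrightarrow> (\<exists>s\<in>S_den. s \<otimes>\<^bsub>Gamma_ring\<^esub> a = \<zero>\<^bsub>Gamma_ring\<^esub>)"
      if "a \<in> carrier Gamma_ring" for a
      using M_inf_iff_annihilated[of a] that unfolding S_den_def by auto
  qed
  ultimately show ?thesis unfolding Sigma_ring_def by simp
qed

theorem proposition3p8:
  shows "(mat_I :: ('a::comm_ring_1) mat) \<in> S_den
    \<and> (\<forall>s\<in>(S_den :: 'a mat set). \<forall>t\<in>S_den. mat_mult s t \<in> S_den)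
    \<and> (\<forall>n. \<forall>E\<in>(Gamma :: 'a mat set). \<exists>m. \<exists>E'\<in>Gamma.
          mat_mult E' (mat_Ibar n) = mat_mult (mat_Ibar m) E)
    \<and> (\<forall>n. \<forall>E\<in>(Gamma :: 'a mat set). mat_mult E (mat_Ibar n) = mat_zero
          \<longrightarrow> (\<exists>m. mat_mult (mat_Ibar m) E = mat_zero))
    \<and> left_ring_of_fractions (Gamma_ring :: 'a mat ring) S_den Sigma_ring Sigma_proj"
  using I_in_S_den S_den_mult_closed S_den_left_Ore S_den_left_reversible
    Sigma_left_ring_of_fractions
  by blast

end
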